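(* Let $f\in\mathbb Z[x,x^{-1}]$ be a nonzero hyperbolic Laurent polynomial. Then there exists a natural number $N$ such that $B_\infty(N)+f\cdot\mathbb Z_{ac}[x)=\mathbb Z_{ac}[x)$, where for $k\in\mathbb N$, $B_k(N)=\{\sum_ia_ix^i:|a_i|\le N\text{ for all }i,\ a_i\in\mathbb Z,\ a_i=0\text{ for }i<-k\}$ and $B_\infty(N)=\bigcup_kB_k(N)$.
   Context: A formal Laurent series $\sum c_nx^n$ is almost convergent if $\limsup_{n\to\infty}|c_n|^{1/n}\le1$ and $\limsup_{n\to\infty}|c_{-n}|^{1/n}\le1$; $\mathbb Z_{ac}[x)$ denotes the almost convergent series with integer coefficients having only finitely many nonzero coefficients at negative powers of $x$. A Laurent polynomial is hyperbolic if it has no complex root on the unit circle. *)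

theory Defs
  imports Complex_Main "HOL-Library.Extended_Real" "HOL-Library.Liminf_Limsup"
begin

text \<open>Formal (bi-infinite) Laurent series with integer coefficients are
  represented by their coefficient functions  int => int.\<close>

definition almost_convergent :: "(int \<Rightarrow> int) \<Rightarrow> bool" where
  "almost_convergent c \<longleftrightarrow>
     limsup (\<lambda>n::nat. ereal (root n \<bar>real_of_int (c (int n))\<bar>)) \<le> 1 \<and>
     limsup (\<lambda>n::nat. ereal (root n \<bar>real_of_int (c (- int n))\<bar>)) \<le> 1"

definition Zac :: "(int \<Rightarrow> int) set" where
  "Zac = {c. almost_convergent c \<and> (\<exists>k::int. \<forall>i<k. c i = 0)}"

definition laurent_poly :: "(int \<Rightarrow> int) \<Rightarrow> bool" where
  "laurent_poly f \<longleftrightarrow> finite {i. f i \<noteq> 0}"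

definition lp_eval :: "(int \<Rightarrow> int) \<Rightarrow> complex \<Rightarrow> complex" where
  "lp_eval f z = (\<Sum>i\<in>{i. f i \<noteq> 0}. of_int (f i) * z powi i)"

definition hyperbolic :: "(int \<Rightarrow> int) \<Rightarrow> bool" where
  "hyperbolic f \<longleftrightarrow> (\<forall>z::complex. cmod z = 1 \<longrightarrow> lp_eval f z \<noteq> 0)"

definition lp_mult :: "(int \<Rightarrow> int) \<Rightarrow> (int \<Rightarrow> int) \<Rightarrow> (int \<Rightarrow> int)" where
  "lp_mult f g = (\<lambda>n. \<Sum>i\<in>{i. f i \<noteq> 0}. f i * g (n - i))"

definition B :: "nat \<Rightarrow> nat \<Rightarrow> (int \<Rightarrow> int) set" where
  "B k N = {a. (\<forall>i. \<bar>a i\<bar> \<le> int N) \<and> (\<forall>i < - int k. a i = 0)}"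

definition B_inf :: "nat \<Rightarrow> (int \<Rightarrow> int) set" where
  "B_inf N = (\<Union>k. B k N)"

end

theory Submission
  imports Defs "HOL-Computational_Algebra.Fundamental_Theorem_Algebra"
begin

text \<open>Call a complex two-sided sequence tempered if it grows subexponentially to the right and
  decays exponentially to the left. An integer sequence is tempered iff it lies in
  \<open>\<int>\<^sub>a\<^sub>c[x)\<close>. Up to a power of \<open>x\<close>, \<open>f\<close> is a complex polynomial without roots on the
  unit circle, and dividing by each linear factor \<open>x - \<alpha>\<close> (a geometric series in \<open>x / \<alpha>\<close> or
  \<open>\<alpha> / x\<close>) shows that every tempered sequence, in particular every \<open>c \<in> \<int>\<^sub>a\<^sub>c[x)\<close>, is
  \<open>f h\<close> for a tempered \<open>h\<close>. Rounding the real part of \<open>h\<close> gives \<open>g \<in> \<int>\<^sub>a\<^sub>c[x)\<close> with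
  \<open>c - f g = f (h - g)\<close> bounded by \<open>\<Sum>\<^sub>i |f\<^sub>i|\<close>, which is the required \<open>N\<close>; the other inclusion
  is closure of \<open>\<int>\<^sub>a\<^sub>c[x)\<close> under sums and multiplication by \<open>f\<close>.\<close>

section \<open>Tempered sequences\<close>

definition weight :: "real \<Rightarrow> real \<Rightarrow> int \<Rightarrow> real" where
  "weight \<rho> q n = (if 0 \<le> n then q ^ nat n else \<rho> ^ nat (- n))"

lemma weight_pos: "0 < \<rho> \<Longrightarrow> 0 < q \<Longrightarrow> 0 < weight \<rho> q n"
  by (simp add: weight_def)

lemma weight_mono:
  assumes "0 < \<rho>" "\<rho> \<le> 1" "1 \<le> q" "m \<le> n"
  shows "weight \<rho> q m \<le> weight \<rho> q n"
  using assms
  by (auto simp: weight_def intro: power_increasing power_decreasing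
      order_trans[OF power_le_one one_le_power])

lemma weight_shift_le:
  assumes "0 < \<rho>" "\<rho> \<le> 1" "1 \<le> q"
  shows "weight \<rho> q (n + int k) \<le> max q (1 / \<rho>) ^ k * weight \<rho> q n"
proof (induction k)
  case 0
  then show ?case by simp
next
  case (Suc k)
  have step: "weight \<rho> q (m + 1) \<le> max q (1 / \<rho>) * weight \<rho> q m" for m
  proof -
    consider "0 \<le> m" | "m = -1" | "m < -1" by linarith
    then show ?thesis
    proof cases
      case 1
      then have "weight \<rho> q (m + 1) = q * weight \<rho> q m"
        by (simp add: weight_def nat_add_distrib)
      then show ?thesis
        using weight_pos[of \<rho> q m] assms
          mult_right_mono[of q "max q (1 / \<rho>)" "weight \<rho> q m"] by simp
    next
      case 2
      then show ?thesis
        using assms mult_left_mono[of "1 / \<rho>" "max q (1 / \<rho>)" \<rho>] by (simp add: weight_def mult.commute)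
    next
      case 3
      then have "nat (- m) = Suc (nat (- (m + 1)))" by simp
      then have "weight \<rho> q (m + 1) = 1 / \<rho> * weight \<rho> q m"
        using 3 assms by (simp add: weight_def mult.commute)
      then show ?thesis
        using weight_pos[of \<rho> q m] assms
          mult_right_mono[of "1 / \<rho>" "max q (1 / \<rho>)" "weight \<rho> q m"] by simp
    qed
  qed
  have "weight \<rho> q (n + int (Suc k)) \<le> max q (1 / \<rho>) * weight \<rho> q (n + int k)"
    using step[of "n + int k"] by (simp add: add_ac)
  also have "\<dots> \<le> max q (1 / \<rho>) ^ Suc k * weight \<rho> q n"
    using mult_left_mono[OF Suc, of "max q (1 / \<rho>)"] assms by (simp add: mult.assoc)
  finally show ?case .
qed

lemma weight_mono_base: "0 < \<rho> \<Longrightarrow> \<rho> \<le> \<rho>' \<Longrightarrow> weight \<rho> q n \<le> weight \<rho>' q n"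
  by (simp add: weight_def power_mono)

lemma weight_mono_growth: "1 \<le> q \<Longrightarrow> q \<le> q' \<Longrightarrow> weight \<rho> q n \<le> weight \<rho> q' n"
  by (simp add: weight_def power_mono)

text \<open>Exponential decay to the left replaces the finite left tail of \<open>\<int>\<^sub>a\<^sub>c[x)\<close>, because
  dividing by \<open>x - \<alpha>\<close> with \<open>|\<alpha>| < 1\<close> produces infinite, geometrically decaying left tails.\<close>

definition tempered :: "(int \<Rightarrow> 'a::real_normed_vector) \<Rightarrow> bool" where
  "tempered s \<longleftrightarrow>
     (\<exists>\<rho>. 0 < \<rho> \<and> \<rho> < 1 \<and> (\<forall>q>1. \<exists>C\<ge>0. \<forall>n. norm (s n) \<le> C * weight \<rho> q n))"

lemma temperedE:
  assumes "tempered s"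
  obtains \<rho>\<^sub>0 where "0 < \<rho>\<^sub>0" "\<rho>\<^sub>0 < 1"
    "\<And>\<rho> q. \<rho>\<^sub>0 \<le> \<rho> \<Longrightarrow> 1 < q \<Longrightarrow> \<exists>C\<ge>0. \<forall>n. norm (s n) \<le> C * weight \<rho> q n"
proof -
  obtain \<rho>\<^sub>0 where \<rho>\<^sub>0: "0 < \<rho>\<^sub>0" "\<rho>\<^sub>0 < 1"
    and bound: "\<And>q. 1 < q \<Longrightarrow> \<exists>C\<ge>0. \<forall>n. norm (s n) \<le> C * weight \<rho>\<^sub>0 q n"
    using assms unfolding tempered_def by blast
  have "\<exists>C\<ge>0. \<forall>n. norm (s n) \<le> C * weight \<rho> q n" if "\<rho>\<^sub>0 \<le> \<rho>" "1 < q" for \<rho> q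
  proof -
    obtain C where "C \<ge> 0" "\<forall>n. norm (s n) \<le> C * weight \<rho>\<^sub>0 q n"
      using bound \<open>1 < q\<close> by blast
    then show ?thesis
      using weight_mono_base[OF \<rho>\<^sub>0(1) \<open>\<rho>\<^sub>0 \<le> \<rho>\<close>] by (meson mult_left_mono order_trans)
  qed
  then show ?thesis using that \<rho>\<^sub>0 by blast
qed

lemma tempered_0: "tempered (\<lambda>n. 0)"
  unfolding tempered_def by (intro exI[of _ "1/2"]) auto

lemma tempered_add:
  assumes "tempered s" "tempered t"
  shows "tempered (\<lambda>n. s n + t n)"
proof -
  obtain \<rho>\<^sub>1 where \<rho>\<^sub>1: "0 < \<rho>\<^sub>1" "\<rho>\<^sub>1 < 1"
    and s: "\<And>\<rho> q. \<rho>\<^sub>1 \<le> \<rho> \<Longrightarrow> 1 < q \<Longrightarrow> \<exists>C\<ge>0. \<forall>n. norm (s n) \<le> C * weight \<rho> q n"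
    using temperedE[OF assms(1)] by blast
  obtain \<rho>\<^sub>2 where \<rho>\<^sub>2: "0 < \<rho>\<^sub>2" "\<rho>\<^sub>2 < 1"
    and t: "\<And>\<rho> q. \<rho>\<^sub>2 \<le> \<rho> \<Longrightarrow> 1 < q \<Longrightarrow> \<exists>C\<ge>0. \<forall>n. norm (t n) \<le> C * weight \<rho> q n"
    using temperedE[OF assms(2)] by blast
  define \<rho> where "\<rho> = max \<rho>\<^sub>1 \<rho>\<^sub>2"
  have "\<exists>C\<ge>0. \<forall>n. norm (s n + t n) \<le> C * weight \<rho> q n" if "1 < q" for q
  proof -
    obtain C\<^sub>1 C\<^sub>2 where "C\<^sub>1 \<ge> 0" "\<forall>n. norm (s n) \<le> C\<^sub>1 * weight \<rho> q n"
      "C\<^sub>2 \<ge> 0" "\<forall>n. norm (t n) \<le> C\<^sub>2 * weight \<rho> q n"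
      using s[of \<rho> q] t[of \<rho> q] \<open>1 < q\<close> by (auto simp: \<rho>_def)
    then have "\<forall>n. norm (s n + t n) \<le> (C\<^sub>1 + C\<^sub>2) * weight \<rho> q n"
      by (metis distrib_right add_mono norm_triangle_le)
    then show ?thesis using \<open>C\<^sub>1 \<ge> 0\<close> \<open>C\<^sub>2 \<ge> 0\<close> by (intro exI[of _ "C\<^sub>1 + C\<^sub>2"]) auto
  qed
  moreover have "0 < \<rho>" "\<rho> < 1" using \<rho>\<^sub>1 \<rho>\<^sub>2 by (auto simp: \<rho>_def)
  ultimately show ?thesis unfolding tempered_def by blast
qed

lemma tempered_sum:
  "finite A \<Longrightarrow> (\<And>i. i \<in> A \<Longrightarrow> tempered (s i)) \<Longrightarrow> tempered (\<lambda>n. \<Sum>i\<in>A. s i n)"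
  by (induction A rule: finite_induct) (simp_all add: tempered_0 tempered_add)

lemma tempered_mult_left:
  fixes s :: "int \<Rightarrow> 'a::real_normed_algebra"
  assumes "tempered s"
  shows "tempered (\<lambda>n. c * s n)"
proof -
  obtain \<rho> where \<rho>: "0 < \<rho>" "\<rho> < 1"
    and s: "\<And>q. 1 < q \<Longrightarrow> \<exists>C\<ge>0. \<forall>n. norm (s n) \<le> C * weight \<rho> q n"
    using assms unfolding tempered_def by blast
  have "\<exists>C\<ge>0. \<forall>n. norm (c * s n) \<le> C * weight \<rho> q n" if "1 < q" for q
  proof -
    obtain C where C: "C \<ge> 0" "\<forall>n. norm (s n) \<le> C * weight \<rho> q n"
      using s \<open>1 < q\<close> by blast
    have "norm (c * s n) \<le> (norm c * C) * weight \<rho> q n" for n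
      using norm_mult_ineq[of c "s n"] mult_left_mono[OF C(2)[rule_format, of n], of "norm c"]
      by (simp add: mult.assoc)
    then show ?thesis using C(1) by (intro exI[of _ "norm c * C"]) auto
  qed
  then show ?thesis using \<rho> unfolding tempered_def by blast
qed

lemma tempered_shift:
  assumes "tempered s"
  shows "tempered (\<lambda>n. s (n + d))"
proof -
  obtain \<rho> where \<rho>: "0 < \<rho>" "\<rho> < 1"
    and s: "\<And>q. 1 < q \<Longrightarrow> \<exists>C\<ge>0. \<forall>n. norm (s n) \<le> C * weight \<rho> q n"
    using assms unfolding tempered_def by blast
  have "\<exists>C\<ge>0. \<forall>n. norm (s (n + d)) \<le> C * weight \<rho> q n" if "1 < q" for q
  proof -
    obtain C where C: "C \<ge> 0" "\<forall>n. norm (s n) \<le> C * weight \<rho> q n"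
      using s \<open>1 < q\<close> by blast
    define K where "K = max q (1 / \<rho>) ^ nat d"
    have "weight \<rho> q (n + d) \<le> K * weight \<rho> q n" for n
    proof (cases "0 \<le> d")
      case True
      then show ?thesis
        using weight_shift_le[of \<rho> q n "nat d"] \<rho> \<open>1 < q\<close> by (simp add: K_def)
    next
      case False
      then show ?thesis using weight_mono[of \<rho> q "n + d" n] \<rho> \<open>1 < q\<close> by (simp add: K_def)
    qed
    then have "\<forall>n. norm (s (n + d)) \<le> (C * K) * weight \<rho> q n"
      using C by (metis mult.assoc mult_left_mono order_trans)
    moreover have "K \<ge> 0" using \<rho> by (simp add: K_def le_max_iff_disj)
    ultimately show ?thesis using C(1) by (intro exI[of _ "C * K"]) auto
  qed
  then show ?thesis using \<rho> unfolding tempered_def by blast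
qed

section \<open>Division by linear factors\<close>

lemma geometric_majorant:
  fixes f :: "nat \<Rightarrow> 'a::banach"
  assumes "\<And>m. norm (f m) \<le> K * r ^ m" "0 \<le> r" "r < 1"
  shows "summable f" "norm (suminf f) \<le> K / (1 - r)"
proof -
  have geo: "summable (\<lambda>m. K * r ^ m)"
    using assms by (intro summable_mult summable_geometric) auto
  show "summable f" by (rule summable_comparison_test'[OF geo]) (use assms in auto)
  have norms: "summable (\<lambda>m. norm (f m))" by (rule summable_comparison_test'[OF geo]) (use assms in auto)
  have "norm (suminf f) \<le> (\<Sum>m. norm (f m))" by (rule summable_norm[OF norms])
  also have "\<dots> \<le> (\<Sum>m. K * r ^ m)" by (rule suminf_le[OF _ norms geo]) (use assms in auto)
  also have "\<dots> = K / (1 - r)" using suminf_geometric[of r] assms by (simp add: suminf_mult)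
  finally show "norm (suminf f) \<le> K / (1 - r)" .
qed

lemma weighted_left_series_bound:
  fixes s :: "int \<Rightarrow> 'a::{real_normed_field, banach}"
  assumes "0 < \<rho>" "\<rho> \<le> 1" "1 \<le> q" "C \<ge> 0" "\<forall>n. norm (s n) \<le> C * weight \<rho> q n"
    and "1 < norm \<alpha>"
  shows "summable (\<lambda>m. s (n - int m) / \<alpha> ^ Suc m)"
    and "norm (\<Sum>m. s (n - int m) / \<alpha> ^ Suc m) \<le> C / (norm \<alpha> - 1) * weight \<rho> q n"
proof -
  define \<beta> where "\<beta> = 1 / norm \<alpha>"
  have \<beta>: "0 < \<beta>" "\<beta> < 1" using assms(6) by (auto simp: \<beta>_def divide_less_eq)
  have "norm (s (n - int m) / \<alpha> ^ Suc m) \<le> (C * weight \<rho> q n * \<beta>) * \<beta> ^ m" for m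
  proof -
    have "weight \<rho> q (n - int m) \<le> weight \<rho> q n"
      using assms(1-3) by (intro weight_mono) auto
    then have "norm (s (n - int m)) \<le> C * weight \<rho> q n"
      using assms(4,5) by (meson mult_left_mono order_trans)
    moreover have "norm (s (n - int m) / \<alpha> ^ Suc m) = norm (s (n - int m)) * (\<beta> * \<beta> ^ m)"
      by (simp add: \<beta>_def norm_divide norm_mult norm_power power_one_over)
    ultimately show ?thesis
      using \<beta> by (simp add: mult_right_mono mult.assoc)
  qed
  note series = geometric_majorant[OF this less_imp_le[OF \<beta>(1)] \<beta>(2)]
  show "summable (\<lambda>m. s (n - int m) / \<alpha> ^ Suc m)" by (rule series(1))
  have "\<alpha> \<noteq> 0" using assms(6) by auto
  then have "C * weight \<rho> q n * \<beta> / (1 - \<beta>) = C / (norm \<alpha> - 1) * weight \<rho> q n"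
    using assms(6) by (simp add: \<beta>_def field_simps)
  then show "norm (\<Sum>m. s (n - int m) / \<alpha> ^ Suc m) \<le> C / (norm \<alpha> - 1) * weight \<rho> q n"
    using series(2) by simp
qed

lemma left_series_recurrence:
  fixes s :: "int \<Rightarrow> 'a::{real_normed_field, banach}"
  assumes "\<And>n. summable (\<lambda>m. s (n - int m) / \<alpha> ^ Suc m)" "\<alpha> \<noteq> 0"
    and "\<And>n. t n = - (\<Sum>m. s (n - int m) / \<alpha> ^ Suc m)"
  shows "t (n - 1) - \<alpha> * t n = s n"
proof -
  define F where "F m = s (n - int m) / \<alpha> ^ m" for m
  have F: "F = (\<lambda>m. \<alpha> * (s (n - int m) / \<alpha> ^ Suc m))"
    using assms(2) by (auto simp: F_def)
  have "summable F" unfolding F by (rule summable_mult[OF assms(1)])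
  then have "(\<Sum>m. F (Suc m)) = suminf F - F 0" by (rule suminf_split_head)
  moreover have "(\<lambda>m. F (Suc m)) = (\<lambda>m. s (n - 1 - int m) / \<alpha> ^ Suc m)"
    by (auto simp: F_def algebra_simps)
  moreover have "suminf F = \<alpha> * (\<Sum>m. s (n - int m) / \<alpha> ^ Suc m)"
    unfolding F by (rule suminf_mult[OF assms(1)])
  moreover have "F 0 = s n" by (simp add: F_def)
  ultimately show ?thesis by (simp add: assms(3))
qed

text \<open>Division by \<open>x - \<alpha>\<close> for \<open>|\<alpha>| > 1\<close>: expand \<open>1 / (x - \<alpha>)\<close> in powers of \<open>x / \<alpha>\<close>,
  so that \<open>t n\<close> only involves \<open>s\<close> to the left of \<open>n\<close>.\<close>

lemma tempered_solve_linear_outside: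
  fixes s :: "int \<Rightarrow> 'a::{real_normed_field, banach}"
  assumes "tempered s" "norm \<alpha> > 1"
  shows "\<exists>t. tempered t \<and> (\<forall>n. t (n - 1) - \<alpha> * t n = s n)"
proof -
  obtain \<rho> where \<rho>: "0 < \<rho>" "\<rho> < 1"
    and s: "\<And>q. 1 < q \<Longrightarrow> \<exists>C\<ge>0. \<forall>n. norm (s n) \<le> C * weight \<rho> q n"
    using assms(1) unfolding tempered_def by blast
  define t where "t n = - (\<Sum>m. s (n - int m) / \<alpha> ^ Suc m)" for n
  note bound = weighted_left_series_bound[where s = s, OF \<rho>(1) less_imp_le[OF \<rho>(2)] _ _ _ assms(2)]
  have "\<exists>C\<ge>0. \<forall>n. norm (t n) \<le> C * weight \<rho> q n" if "1 < q" for q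
  proof -
    obtain C where "C \<ge> 0" "\<forall>n. norm (s n) \<le> C * weight \<rho> q n"
      using s \<open>1 < q\<close> by blast
    then have "\<forall>n. norm (t n) \<le> C / (norm \<alpha> - 1) * weight \<rho> q n"
      using bound(2) \<open>1 < q\<close> by (simp add: t_def)
    then show ?thesis using \<open>C \<ge> 0\<close> assms(2) by (intro exI[of _ "C / (norm \<alpha> - 1)"]) auto
  qed
  then have "tempered t" using \<rho> unfolding tempered_def by blast
  moreover obtain C where C: "C \<ge> 0" "\<forall>n. norm (s n) \<le> C * weight \<rho> 2 n"
    using s[of 2] by auto
  have "\<alpha> \<noteq> 0" using assms(2) by auto
  then have "t (n - 1) - \<alpha> * t n = s n" for n
    using bound(1)[OF _ C] by (intro left_series_recurrence[where s = s]) (auto simp: t_def)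
  ultimately show ?thesis by blast
qed

lemma right_series_recurrence:
  fixes s :: "int \<Rightarrow> 'a::{real_normed_field, banach}"
  assumes "\<And>n. summable (\<lambda>m. \<alpha> ^ m * s (n + 1 + int m))"
    and "\<And>n. t n = (\<Sum>m. \<alpha> ^ m * s (n + 1 + int m))"
  shows "t (n - 1) - \<alpha> * t n = s n"
proof -
  have "(\<Sum>m. \<alpha> ^ Suc m * s (n + int (Suc m))) = t (n - 1) - s n"
    using suminf_split_head[OF assms(1)[of "n - 1"]] by (simp add: assms(2))
  moreover have "(\<Sum>m. \<alpha> ^ Suc m * s (n + int (Suc m))) = \<alpha> * t n"
    using suminf_mult[OF assms(1)[of n], of \<alpha>] by (simp add: assms(2) algebra_simps)
  ultimately show ?thesis by (simp add: eq_diff_eq diff_eq_eq add.commute)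
qed

lemma weighted_right_series_bound:
  fixes s :: "int \<Rightarrow> 'a::{real_normed_field, banach}"
  assumes "0 < \<rho>" "\<rho> \<le> 1" "1 \<le> q" "C \<ge> 0" "\<forall>n. norm (s n) \<le> C * weight \<rho> q n"
    and "norm \<alpha> * max q (1 / \<rho>) < 1"
  defines "\<gamma> \<equiv> max q (1 / \<rho>)"
  shows "summable (\<lambda>m. \<alpha> ^ m * s (n + 1 + int m))"
    and "norm (\<Sum>m. \<alpha> ^ m * s (n + 1 + int m)) \<le> C * \<gamma> / (1 - norm \<alpha> * \<gamma>) * weight \<rho> q n"
proof -
  have "norm (\<alpha> ^ m * s (n + 1 + int m)) \<le> (C * \<gamma> * weight \<rho> q n) * (norm \<alpha> * \<gamma>) ^ m" for m
  proof -
    have "weight \<rho> q (n + int (Suc m)) \<le> \<gamma> ^ Suc m * weight \<rho> q n"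
      unfolding \<gamma>_def using assms(1-3) by (rule weight_shift_le)
    then have "norm (s (n + 1 + int m)) \<le> C * (\<gamma> ^ Suc m * weight \<rho> q n)"
      using assms(4,5) by (metis add.assoc mult_left_mono of_nat_Suc order_trans)
    then have "norm \<alpha> ^ m * norm (s (n + 1 + int m)) \<le> norm \<alpha> ^ m * (C * (\<gamma> ^ Suc m * weight \<rho> q n))"
      by (intro mult_left_mono) auto
    then show ?thesis
      by (simp add: norm_mult norm_power power_mult_distrib mult_ac)
  qed
  moreover have "0 \<le> norm \<alpha> * \<gamma>" using assms(1) by (simp add: \<gamma>_def le_max_iff_disj)
  moreover have "norm \<alpha> * \<gamma> < 1" using assms(6) unfolding \<gamma>_def .
  ultimately have series: "summable (\<lambda>m. \<alpha> ^ m * s (n + 1 + int m))"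
    "norm (\<Sum>m. \<alpha> ^ m * s (n + 1 + int m)) \<le> C * \<gamma> * weight \<rho> q n / (1 - norm \<alpha> * \<gamma>)"
    by (rule geometric_majorant)+
  from series show "summable (\<lambda>m. \<alpha> ^ m * s (n + 1 + int m))"
    and "norm (\<Sum>m. \<alpha> ^ m * s (n + 1 + int m)) \<le> C * \<gamma> / (1 - norm \<alpha> * \<gamma>) * weight \<rho> q n"
    by (simp_all add: mult.commute mult.left_commute)
qed

text \<open>Division by \<open>x - \<alpha>\<close> for \<open>|\<alpha>| < 1\<close>: expand \<open>1 / (x - \<alpha>)\<close> in powers of \<open>\<alpha> / x\<close>,
  so that \<open>t n\<close> involves \<open>s\<close> to the right of \<open>n\<close>. Convergence needs a growth rate
  \<open>q < 1 / |\<alpha>|\<close> and a decay rate \<open>\<rho> > |\<alpha>|\<close>; larger \<open>q\<close> then follow from smaller ones.\<close>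

lemma tempered_solve_linear_inside:
  fixes s :: "int \<Rightarrow> 'a::{real_normed_field, banach}"
  assumes "tempered s" "norm \<alpha> < 1"
  shows "\<exists>t. tempered t \<and> (\<forall>n. t (n - 1) - \<alpha> * t n = s n)"
proof -
  obtain \<rho>\<^sub>0 where \<rho>\<^sub>0: "0 < \<rho>\<^sub>0" "\<rho>\<^sub>0 < 1"
    and s: "\<And>\<rho> q. \<rho>\<^sub>0 \<le> \<rho> \<Longrightarrow> 1 < q \<Longrightarrow> \<exists>C\<ge>0. \<forall>n. norm (s n) \<le> C * weight \<rho> q n"
    using temperedE[OF assms(1)] by blast
  define \<rho> where "\<rho> = max \<rho>\<^sub>0 ((1 + norm \<alpha>) / 2)"
  define q\<^sub>0 where "q\<^sub>0 = 2 / (1 + norm \<alpha>)"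
  have \<rho>: "0 < \<rho>" "\<rho> < 1" "norm \<alpha> < \<rho>"
    using \<rho>\<^sub>0 assms(2) by (auto simp: \<rho>_def less_max_iff_disj)
  have "0 < 1 + norm \<alpha>" by (simp add: add_pos_nonneg)
  then have "1 < q\<^sub>0" using assms(2) by (simp add: q\<^sub>0_def less_divide_eq)
  have convergent: "norm \<alpha> * max q (1 / \<rho>) < 1" if "q \<le> q\<^sub>0" for q
  proof -
    have "norm \<alpha> * q\<^sub>0 < 1"
      using \<open>0 < 1 + norm \<alpha>\<close> assms(2) by (simp add: q\<^sub>0_def divide_less_eq)
    moreover have "norm \<alpha> * (1 / \<rho>) < 1" using \<rho> by (simp add: field_simps)
    ultimately show ?thesis
      using that mult_left_mono[OF that, of "norm \<alpha>"] by (auto simp: max_def)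
  qed
  define t where "t n = (\<Sum>m. \<alpha> ^ m * s (n + 1 + int m))" for n
  note bound = weighted_right_series_bound[where s = s, OF \<rho>(1) less_imp_le[OF \<rho>(2)]]
  have "\<exists>C\<ge>0. \<forall>n. norm (t n) \<le> C * weight \<rho> q n" if "1 < q" for q
  proof -
    define q' where "q' = min q q\<^sub>0"
    have q': "1 < q'" "q' \<le> q\<^sub>0" "q' \<le> q" using \<open>1 < q\<close> \<open>1 < q\<^sub>0\<close> by (auto simp: q'_def)
    obtain C where C: "C \<ge> 0" "\<forall>n. norm (s n) \<le> C * weight \<rho> q' n"
      using s[of \<rho> q'] q' by (auto simp: \<rho>_def)
    define K where "K = C * max q' (1 / \<rho>) / (1 - norm \<alpha> * max q' (1 / \<rho>))"
    have "K \<ge> 0" using C(1) convergent[OF q'(2)] \<rho> by (simp add: K_def le_max_iff_disj)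
    have "norm (t n) \<le> K * weight \<rho> q n" for n
    proof -
      have "norm (t n) \<le> K * weight \<rho> q' n"
        using bound(2)[OF _ C convergent[OF q'(2)]] q' by (simp add: t_def K_def)
      also have "\<dots> \<le> K * weight \<rho> q n"
        using \<open>K \<ge> 0\<close> q' by (intro mult_left_mono weight_mono_growth) auto
      finally show ?thesis .
    qed
    then show ?thesis using \<open>K \<ge> 0\<close> by blast
  qed
  then have "tempered t" using \<rho> unfolding tempered_def by blast
  moreover obtain C where C: "C \<ge> 0" "\<forall>n. norm (s n) \<le> C * weight \<rho> q\<^sub>0 n"
    using s[of \<rho> q\<^sub>0] \<open>1 < q\<^sub>0\<close> by (auto simp: \<rho>_def)
  then have "t (n - 1) - \<alpha> * t n = s n" for n
    using bound(1)[OF less_imp_le[OF \<open>1 < q\<^sub>0\<close>] C convergent[OF order_refl]]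
    by (intro right_series_recurrence[where s = s]) (auto simp: t_def)
  ultimately show ?thesis by blast
qed

lemma tempered_solve_linear:
  fixes s :: "int \<Rightarrow> 'a::{real_normed_field, banach}"
  assumes "tempered s" "norm \<alpha> \<noteq> 1"
  shows "\<exists>t. tempered t \<and> (\<forall>n. t (n - 1) - \<alpha> * t n = s n)"
  using tempered_solve_linear_inside[OF assms(1)] tempered_solve_linear_outside[OF assms(1)] assms(2)
  by (cases "norm \<alpha> < 1") auto

section \<open>Polynomials acting on sequences\<close>

text \<open>Multiplication of a two-sided sequence by a polynomial, \<open>x\<close> acting as the right shift.\<close>

definition poly_conv :: "'a::comm_ring_1 poly \<Rightarrow> (int \<Rightarrow> 'a) \<Rightarrow> int \<Rightarrow> 'a" where
  "poly_conv P t n = (\<Sum>i\<le>degree P. coeff P i * t (n - int i))"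

lemma poly_conv_altdef: "degree P < m \<Longrightarrow> poly_conv P t n = (\<Sum>i<m. coeff P i * t (n - int i))"
  unfolding poly_conv_def by (rule sum.mono_neutral_left) (auto simp: coeff_eq_0)

lemma poly_conv_0 [simp]: "poly_conv 0 t n = 0"
  by (simp add: poly_conv_def)

lemma poly_conv_pCons: "poly_conv (pCons a P) t n = a * t n + poly_conv P t (n - 1)"
proof -
  have "poly_conv (pCons a P) t n = (\<Sum>i<Suc (Suc (degree P)). coeff (pCons a P) i * t (n - int i))"
    using degree_pCons_le[of a P] by (intro poly_conv_altdef) simp
  also have "\<dots> = a * t n + (\<Sum>i<Suc (degree P). coeff P i * t (n - 1 - int i))"
    by (subst sum.lessThan_Suc_shift) (simp add: algebra_simps)
  also have "(\<Sum>i<Suc (degree P). coeff P i * t (n - 1 - int i)) = poly_conv P t (n - 1)"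
    by (rule poly_conv_altdef[symmetric]) simp
  finally show ?thesis .
qed

lemma poly_conv_add: "poly_conv (P + Q) t n = poly_conv P t n + poly_conv Q t n"
proof -
  define m where "m = Suc (max (degree P) (degree Q))"
  have "degree (P + Q) < m" "degree P < m" "degree Q < m"
    using degree_add_le[of P "max (degree P) (degree Q)" Q] by (auto simp: m_def)
  then show ?thesis by (simp add: poly_conv_altdef distrib_right sum.distrib)
qed

lemma poly_conv_smult: "poly_conv (smult a P) t n = a * poly_conv P t n"
proof -
  have "degree (smult a P) < Suc (degree P)" using degree_smult_le[of a P] by simp
  then show ?thesis
    by (simp add: poly_conv_altdef[of _ "Suc (degree P)"] sum_distrib_left mult.assoc
        del: sum.lessThan_Suc)
qed

lemma poly_conv_mult: "poly_conv (P * Q) t n = poly_conv P (poly_conv Q t) n"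
  by (induction P arbitrary: n) (simp_all add: poly_conv_pCons poly_conv_add poly_conv_smult)

lemma poly_conv_sum:
  "poly_conv (\<Sum>i\<in>A. P i) t n = (\<Sum>i\<in>A. poly_conv (P i) t n)"
  by (induction A rule: infinite_finite_induct) (simp_all add: poly_conv_add)

lemma poly_conv_monom: "poly_conv (monom a k) t n = a * t (n - int k)"
  by (simp add: poly_conv_altdef[of _ "Suc k"] coeff_monom degree_monom_le le_imp_less_Suc
      if_distrib cong: if_cong)

lemma tempered_poly_conv_surj:
  fixes P :: "complex poly"
  assumes "P \<noteq> 0" "\<And>z. cmod z = 1 \<Longrightarrow> poly P z \<noteq> 0" "tempered s"
  shows "\<exists>t. tempered t \<and> (\<forall>n. poly_conv P t n = s n)"
  using assms
proof (induction "degree P" arbitrary: P s rule: less_induct)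
  case less
  show ?case
  proof (cases "degree P = 0")
    case True
    then obtain c where P: "P = [:c:]" and "c \<noteq> 0"
      using less.prems(1) by (metis degree_eq_zeroE pCons_0_0)
    then have "poly_conv P (\<lambda>n. s n / c) n = s n" for n
      by (simp add: poly_conv_pCons)
    then show ?thesis
      using tempered_mult_left[OF less.prems(3), of "1 / c"] by auto
  next
    case False
    then obtain \<alpha> where "poly P \<alpha> = 0"
      by (metis constant_degree fundamental_theorem_of_algebra)
    then obtain Q where P: "P = [:-\<alpha>, 1:] * Q"
      by (metis dvdE poly_eq_0_iff_dvd)
    with less.prems(1) have "Q \<noteq> 0" by auto
    have "cmod \<alpha> \<noteq> 1"
      using less.prems(2) \<open>poly P \<alpha> = 0\<close> by blast
    then obtain u where "tempered u" and u: "\<forall>n. u (n - 1) - \<alpha> * u n = s n"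
      using tempered_solve_linear[OF less.prems(3)] by blast
    have "degree Q < degree P"
      unfolding P using \<open>Q \<noteq> 0\<close> by (subst degree_mult_eq) auto
    moreover have "poly Q z \<noteq> 0" if "cmod z = 1" for z
      using less.prems(2)[OF that] by (simp add: P)
    ultimately obtain t where "tempered t" and t: "\<forall>n. poly_conv Q t n = u n"
      using less.hyps \<open>Q \<noteq> 0\<close> \<open>tempered u\<close> by blast
    have "poly_conv P t n = s n" for n
    proof -
      have "poly_conv P t n = poly_conv [:-\<alpha>, 1:] (poly_conv Q t) n"
        unfolding P by (rule poly_conv_mult)
      also have "\<dots> = u (n - 1) - \<alpha> * u n"
        using t by (simp add: poly_conv_pCons)
      finally show ?thesis using u by simp
    qed
    then show ?thesis using \<open>tempered t\<close> by blast
  qed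
qed

section \<open>Tempered integer sequences\<close>

lemma exp_bound_if_limsup_root_le_one:
  fixes x :: "nat \<Rightarrow> real"
  assumes "limsup (\<lambda>n. ereal (root n \<bar>x n\<bar>)) \<le> 1" "1 < q"
  shows "\<exists>C. \<forall>n. \<bar>x n\<bar> \<le> C * q ^ n"
proof -
  have "limsup (\<lambda>n. ereal (root n \<bar>x n\<bar>)) < ereal q"
    using assms by (simp add: le_less_trans one_ereal_def)
  then have "eventually (\<lambda>n. ereal (root n \<bar>x n\<bar>) < ereal q) sequentially"
    by (rule Limsup_lessD)
  then obtain m where m: "\<And>n. n \<ge> m \<Longrightarrow> root n \<bar>x n\<bar> < q"
    by (auto simp: eventually_sequentially)
  define C where "C = 1 + (\<Sum>n\<le>m. \<bar>x n\<bar>)"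
  have "1 \<le> C" by (simp add: C_def sum_nonneg)
  have "\<bar>x n\<bar> \<le> C * q ^ n" for n
  proof (cases "n \<le> m")
    case True
    then have "\<bar>x n\<bar> \<le> C" unfolding C_def
      using member_le_sum[of n "{..m}" "\<lambda>n. \<bar>x n\<bar>"] by simp
    also have "C \<le> C * q ^ n"
      using \<open>1 \<le> C\<close> \<open>1 < q\<close> mult_left_mono[of 1 "q ^ n" C] by (simp add: one_le_power)
    finally show ?thesis .
  next
    case False
    then have "\<bar>x n\<bar> = root n \<bar>x n\<bar> ^ n" by simp
    also have "\<dots> \<le> q ^ n" using m[of n] False by (intro power_mono) auto
    also have "\<dots> \<le> C * q ^ n"
      using \<open>1 \<le> C\<close> \<open>1 < q\<close> mult_right_mono[of 1 C "q ^ n"] by simp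
    finally show ?thesis .
  qed
  then show ?thesis by blast
qed

lemma limsup_root_le_one_if_exp_bound:
  fixes x :: "nat \<Rightarrow> real"
  assumes "\<And>q. 1 < q \<Longrightarrow> \<exists>C. \<forall>n. \<bar>x n\<bar> \<le> C * q ^ n"
  shows "limsup (\<lambda>n. ereal (root n \<bar>x n\<bar>)) \<le> 1"
proof -
  have "limsup (\<lambda>n. ereal (root n \<bar>x n\<bar>)) \<le> ereal q" if "1 < q" for q
  proof -
    obtain C\<^sub>0 where C\<^sub>0: "\<forall>n. \<bar>x n\<bar> \<le> C\<^sub>0 * q ^ n" using assms \<open>1 < q\<close> by blast
    define C where "C = max C\<^sub>0 1"
    have C: "\<bar>x n\<bar> \<le> C * q ^ n" for n
    proof -
      have "C\<^sub>0 * q ^ n \<le> C * q ^ n"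
        using \<open>1 < q\<close> by (intro mult_right_mono) (auto simp: C_def)
      then show ?thesis using C\<^sub>0 by (meson order_trans)
    qed
    have "eventually (\<lambda>n. ereal (root n \<bar>x n\<bar>) \<le> ereal (root n C * q)) sequentially"
      unfolding eventually_sequentially
    proof (intro exI allI impI)
      fix n :: nat
      assume "1 \<le> n"
      then have "root n \<bar>x n\<bar> \<le> root n (C * q ^ n)" using C by (subst real_root_le_iff) auto
      also have "\<dots> = root n C * q"
        using \<open>1 \<le> n\<close> \<open>1 < q\<close> by (simp add: real_root_mult real_root_pos_unique)
      finally show "ereal (root n \<bar>x n\<bar>) \<le> ereal (root n C * q)" by simp
    qed
    then have "limsup (\<lambda>n. ereal (root n \<bar>x n\<bar>)) \<le> limsup (\<lambda>n. ereal (root n C * q))"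
      by (rule Limsup_mono)
    also have "\<dots> = ereal q"
    proof (rule lim_imp_Limsup)
      have "(\<lambda>n. root n C * q) \<longlonglongrightarrow> 1 * q"
        by (intro tendsto_mult LIMSEQ_root_const tendsto_const) (simp add: C_def)
      then show "(\<lambda>n. ereal (root n C * q)) \<longlonglongrightarrow> ereal q" by (simp add: tendsto_ereal)
    qed simp
    finally show ?thesis .
  qed
  then show ?thesis
    by (metis ereal_dense2 less_ereal.simps(1) not_le one_ereal_def)
qed

lemma almost_convergent_iff:
  "almost_convergent c \<longleftrightarrow>
     (\<forall>q>1. \<exists>C. \<forall>n. \<bar>real_of_int (c (int n))\<bar> \<le> C * q ^ n) \<and>
     (\<forall>q>1. \<exists>C. \<forall>n. \<bar>real_of_int (c (- int n))\<bar> \<le> C * q ^ n)"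
proof -
  have "limsup (\<lambda>n. ereal (root n \<bar>x n\<bar>)) \<le> 1 \<longleftrightarrow> (\<forall>q>1. \<exists>C. \<forall>n. \<bar>x n\<bar> \<le> C * q ^ n)"
    for x :: "nat \<Rightarrow> real"
    using exp_bound_if_limsup_root_le_one limsup_root_le_one_if_exp_bound by blast
  then show ?thesis unfolding almost_convergent_def by presburger
qed

lemma almost_convergent_if_exp_bounded:
  assumes "\<And>q. 1 < q \<Longrightarrow> \<exists>C. \<forall>n. \<bar>real_of_int (c n)\<bar> \<le> C * q ^ nat \<bar>n\<bar>"
  shows "almost_convergent c"
proof -
  have "\<exists>C. \<forall>n. \<bar>real_of_int (c (int n))\<bar> \<le> C * q ^ n"
    "\<exists>C. \<forall>n. \<bar>real_of_int (c (- int n))\<bar> \<le> C * q ^ n" if q: "1 < q" for q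
  proof -
    obtain C where C: "\<forall>n. \<bar>real_of_int (c n)\<bar> \<le> C * q ^ nat \<bar>n\<bar>"
      using assms[OF q] by blast
    have "\<bar>real_of_int (c (int n))\<bar> \<le> C * q ^ n" "\<bar>real_of_int (c (- int n))\<bar> \<le> C * q ^ n"
      for n :: nat
      using C[rule_format, of "int n"] C[rule_format, of "- int n"] by simp_all
    then show "\<exists>C. \<forall>n. \<bar>real_of_int (c (int n))\<bar> \<le> C * q ^ n"
      "\<exists>C. \<forall>n. \<bar>real_of_int (c (- int n))\<bar> \<le> C * q ^ n" by blast+
  qed
  then show ?thesis unfolding almost_convergent_iff by blast
qed

lemma tempered_exp_bounded:
  assumes "tempered h" "1 < q"
  obtains C where "C \<ge> 0" "\<And>n. norm (h n) \<le> C * q ^ nat \<bar>n\<bar>"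
proof -
  obtain \<rho> C where \<rho>: "0 < \<rho>" "\<rho> < 1" and "C \<ge> 0"
    and C: "\<forall>n. norm (h n) \<le> C * weight \<rho> q n"
    using assms unfolding tempered_def by blast
  have "weight \<rho> q n \<le> q ^ nat \<bar>n\<bar>" for n
    using \<rho> \<open>1 < q\<close> by (auto simp: weight_def power_le_one one_le_power intro: order_trans[of _ 1])
  then have "norm (h n) \<le> C * q ^ nat \<bar>n\<bar>" for n
    using C \<open>C \<ge> 0\<close> by (meson mult_left_mono order_trans)
  then show thesis using that \<open>C \<ge> 0\<close> by blast
qed

lemma tempered_left_tail_small:
  assumes "tempered h" "0 < \<epsilon>"
  shows "\<exists>k. \<forall>i<k. norm (h i) < \<epsilon>"
proof -
  obtain \<rho> C where \<rho>: "0 < \<rho>" "\<rho> < 1" and "C \<ge> 0"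
    and C: "\<forall>n. norm (h n) \<le> C * weight \<rho> 2 n"
    using assms(1) unfolding tempered_def by force
  obtain m where m: "\<rho> ^ m < \<epsilon> / (C + 1)"
    using real_arch_pow_inv[of "\<epsilon> / (C + 1)" \<rho>] \<rho> \<open>C \<ge> 0\<close> assms(2) by auto
  have "norm (h i) < \<epsilon>" if "i < - int m" for i
  proof -
    have "\<not> 0 \<le> i" using that by simp
    then have "norm (h i) \<le> C * \<rho> ^ nat (- i)" using C[rule_format, of i] by (simp add: weight_def)
    also have "\<dots> \<le> (C + 1) * \<rho> ^ m"
      using \<rho> \<open>C \<ge> 0\<close> that by (intro mult_mono power_decreasing) auto
    also have "\<dots> < \<epsilon>" using m \<open>C \<ge> 0\<close> by (simp add: field_simps)
    finally show ?thesis .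
  qed
  then show ?thesis by blast
qed

lemma tempered_round_Zac:
  assumes "tempered h"
  shows "(\<lambda>n. round (Re (h n))) \<in> Zac"
proof -
  define g where "g n = round (Re (h n))" for n
  have g: "\<bar>real_of_int (g n)\<bar> \<le> norm (h n) + 1" for n
    unfolding g_def using of_int_round_abs_le[of "Re (h n)"] abs_Re_le_cmod[of "h n"] by linarith
  have "\<exists>C. \<forall>n. \<bar>real_of_int (g n)\<bar> \<le> C * q ^ nat \<bar>n\<bar>" if "1 < q" for q
  proof -
    obtain C where C: "\<And>n. norm (h n) \<le> C * q ^ nat \<bar>n\<bar>"
      using tempered_exp_bounded[OF assms \<open>1 < q\<close>] by blast
    have "\<bar>real_of_int (g n)\<bar> \<le> (C + 1) * q ^ nat \<bar>n\<bar>" for n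
    proof -
      have "\<bar>real_of_int (g n)\<bar> \<le> C * q ^ nat \<bar>n\<bar> + q ^ nat \<bar>n\<bar>"
        using g[of n] C[of n] one_le_power[of q "nat \<bar>n\<bar>"] \<open>1 < q\<close> by linarith
      then show ?thesis by (simp add: distrib_right)
    qed
    then show ?thesis by blast
  qed
  then have "almost_convergent g" by (rule almost_convergent_if_exp_bounded)
  moreover obtain k where k: "\<forall>i<k. norm (h i) < 1 / 2"
    using tempered_left_tail_small[OF assms, of "1 / 2"] by auto
  have "g i = 0" if "i < k" for i
  proof -
    have "\<bar>Re (h i) - of_int 0\<bar> < 1 / 2"
      using abs_Re_le_cmod[of "h i"] k that by fastforce
    then show ?thesis unfolding g_def by (rule round_unique')
  qed
  ultimately show ?thesis unfolding Zac_def g_def by blast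
qed

lemma Zac_imp_tempered:
  assumes "c \<in> Zac"
  shows "tempered (\<lambda>n. complex_of_int (c n))"
proof -
  obtain k where k: "\<forall>i<k. c i = 0" and "almost_convergent c"
    using assms by (auto simp: Zac_def)
  define C_left where "C_left = (\<Sum>j\<in>{k..<0}. \<bar>real_of_int (c j)\<bar> * 2 ^ nat (- j))"
  have "C_left \<ge> 0" by (simp add: C_left_def sum_nonneg)
  have left: "\<bar>real_of_int (c n)\<bar> \<le> C_left * (1 / 2) ^ nat (- n)" if "n < 0" for n
  proof (cases "n < k")
    case True
    then show ?thesis using k \<open>C_left \<ge> 0\<close> by simp
  next
    case False
    have "\<bar>real_of_int (c n)\<bar> = (\<bar>real_of_int (c n)\<bar> * 2 ^ nat (- n)) * (1 / 2) ^ nat (- n)"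
      by (simp add: power_one_over)
    also have "\<dots> \<le> C_left * (1 / 2) ^ nat (- n)"
      unfolding C_left_def by (intro mult_right_mono member_le_sum) (use False that in auto)
    finally show ?thesis .
  qed
  have "\<exists>C\<ge>0. \<forall>n. norm (complex_of_int (c n)) \<le> C * weight (1 / 2) q n" if q: "1 < q" for q
  proof -
    obtain C_right where right: "\<forall>n. \<bar>real_of_int (c (int n))\<bar> \<le> C_right * q ^ n"
      using \<open>almost_convergent c\<close> q unfolding almost_convergent_iff by blast
    define C where "C = \<bar>C_right\<bar> + C_left"
    have "\<bar>real_of_int (c n)\<bar> \<le> C * weight (1 / 2) q n" for n
    proof (cases "0 \<le> n")
      case True
      then obtain m where m: "n = int m" by (metis nonneg_int_cases)
      then have "\<bar>real_of_int (c n)\<bar> \<le> C_right * q ^ m" using right by simp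
      also have "\<dots> \<le> C * q ^ m"
        using \<open>1 < q\<close> \<open>C_left \<ge> 0\<close> by (intro mult_right_mono) (auto simp: C_def)
      finally show ?thesis using m by (simp add: weight_def)
    next
      case False
      then have "\<bar>real_of_int (c n)\<bar> \<le> C_left * (1 / 2) ^ nat (- n)" by (intro left) simp
      also have "\<dots> \<le> C * (1 / 2) ^ nat (- n)" by (intro mult_right_mono) (auto simp: C_def)
      finally show ?thesis using False by (simp add: weight_def)
    qed
    then show ?thesis using \<open>C_left \<ge> 0\<close> by (intro exI[of _ C]) (auto simp: C_def)
  qed
  then show ?thesis unfolding tempered_def by (intro exI[of _ "1 / 2"]) auto
qed

lemma tempered_of_int_iff_Zac: "tempered (\<lambda>n. complex_of_int (c n)) \<longleftrightarrow> c \<in> Zac"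
  using tempered_round_Zac[of "\<lambda>n. complex_of_int (c n)"] Zac_imp_tempered by auto

lemma Zac_add: "c \<in> Zac \<Longrightarrow> d \<in> Zac \<Longrightarrow> (\<lambda>n. c n + d n) \<in> Zac"
  unfolding tempered_of_int_iff_Zac[symmetric] by (simp add: tempered_add)

lemma Zac_diff:
  assumes "c \<in> Zac" "d \<in> Zac"
  shows "(\<lambda>n. c n - d n) \<in> Zac"
proof -
  have "tempered (\<lambda>n. complex_of_int (c n) + (- 1) * complex_of_int (d n))"
    using assms unfolding tempered_of_int_iff_Zac[symmetric]
    by (intro tempered_add tempered_mult_left)
  then show ?thesis unfolding tempered_of_int_iff_Zac[symmetric] by simp
qed

lemma Zac_lp_mult:
  assumes "laurent_poly f" "g \<in> Zac"
  shows "lp_mult f g \<in> Zac"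
proof -
  have "tempered (\<lambda>n. \<Sum>i | f i \<noteq> 0. of_int (f i) * complex_of_int (g (n + - i)))"
    using assms unfolding laurent_poly_def
    by (intro tempered_sum tempered_mult_left tempered_shift Zac_imp_tempered)
  then show ?thesis
    unfolding tempered_of_int_iff_Zac[symmetric] by (simp add: lp_mult_def)
qed

lemma B_inf_eq: "B_inf N = {c \<in> Zac. \<forall>i. \<bar>c i\<bar> \<le> int N}"
proof (intro equalityI subsetI)
  fix b
  assume "b \<in> B_inf N"
  then obtain k where bounded: "\<forall>i. \<bar>b i\<bar> \<le> int N" and support: "\<forall>i < - int k. b i = 0"
    by (auto simp: B_inf_def B_def)
  have "\<bar>real_of_int (b i)\<bar> \<le> real N * q ^ nat \<bar>i\<bar>" if "1 < q" for i q
  proof -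
    have "\<bar>real_of_int (b i)\<bar> \<le> real N"
      using bounded by (metis of_int_abs of_int_le_iff of_int_of_nat_eq)
    also have "\<dots> \<le> real N * q ^ nat \<bar>i\<bar>"
      using mult_left_mono[of 1 "q ^ nat \<bar>i\<bar>" "real N"] one_le_power[of q] that by simp
    finally show ?thesis .
  qed
  then have "almost_convergent b" by (blast intro: almost_convergent_if_exp_bounded)
  with bounded support show "b \<in> {c \<in> Zac. \<forall>i. \<bar>c i\<bar> \<le> int N}" by (auto simp: Zac_def)
next
  fix c
  assume "c \<in> {c \<in> Zac. \<forall>i. \<bar>c i\<bar> \<le> int N}"
  then obtain k where "\<forall>i<k. c i = 0" "\<forall>i. \<bar>c i\<bar> \<le> int N" by (auto simp: Zac_def)
  then have "c \<in> B (nat (- k)) N" by (auto simp: B_def)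
  then show "c \<in> B_inf N" by (auto simp: B_inf_def)
qed

section \<open>Approximate division by a hyperbolic Laurent polynomial\<close>

lemma laurent_poly_as_poly:
  assumes "laurent_poly f"
  obtains L :: int and P :: "complex poly" where
    "\<And>z. z \<noteq> 0 \<Longrightarrow> lp_eval f z = z powi L * poly P z"
    "\<And>t n. poly_conv P t n = (\<Sum>i | f i \<noteq> 0. of_int (f i) * t (n - i + L))"
proof -
  define A where "A = {i. f i \<noteq> 0}"
  have "finite A" using assms by (simp add: A_def laurent_poly_def)
  define L where "L = Min (insert 0 A)"
  have L: "L \<le> i" if "i \<in> A" for i
    using \<open>finite A\<close> that by (simp add: L_def)
  define P where "P = (\<Sum>i\<in>A. monom (complex_of_int (f i)) (nat (i - L)))"
  have "lp_eval f z = z powi L * poly P z" if "z \<noteq> 0" for z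
  proof -
    have "z powi i = z powi L * z ^ nat (i - L)" if "i \<in> A" for i
      using L[OF that] \<open>z \<noteq> 0\<close> by (simp flip: power_int_add power_int_of_nat)
    then show ?thesis
      by (simp add: lp_eval_def A_def[symmetric] P_def poly_sum poly_monom sum_distrib_left
          mult.left_commute)
  qed
  moreover have "poly_conv P t n = (\<Sum>i\<in>A. of_int (f i) * t (n - i + L))" for t n
    using L by (simp add: P_def poly_conv_sum poly_conv_monom algebra_simps)
  ultimately show thesis using that by (simp add: A_def)
qed

lemma laurent_conv_tempered_surj:
  fixes s :: "int \<Rightarrow> complex"
  assumes "laurent_poly f" "hyperbolic f" "tempered s"
  shows "\<exists>h. tempered h \<and> (\<forall>n. (\<Sum>i | f i \<noteq> 0. of_int (f i) * h (n - i)) = s n)"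
proof -
  obtain L and P :: "complex poly" where
    eval: "\<And>z. z \<noteq> 0 \<Longrightarrow> lp_eval f z = z powi L * poly P z" and
    conv: "\<And>t n. poly_conv P t n = (\<Sum>i | f i \<noteq> 0. of_int (f i) * t (n - i + L))"
    using laurent_poly_as_poly[OF assms(1)] by blast
  have roots: "poly P z \<noteq> 0" if "cmod z = 1" for z
  proof -
    have "z \<noteq> 0" using that by auto
    then show ?thesis using assms(2) that eval[of z] by (auto simp: hyperbolic_def)
  qed
  then have "P \<noteq> 0" by (metis norm_one poly_0)
  then obtain t where "tempered t" and t: "\<forall>n. poly_conv P t n = s n"
    using tempered_poly_conv_surj[OF _ roots assms(3)] by blast
  define h where "h m = t (m + L)" for m
  have "tempered h" unfolding h_def by (rule tempered_shift[OF \<open>tempered t\<close>])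
  moreover have "(\<Sum>i | f i \<noteq> 0. of_int (f i) * h (n - i)) = s n" for n
    using t conv by (simp add: h_def)
  ultimately show ?thesis by blast
qed

lemma Zac_lp_mult_approx:
  assumes "laurent_poly f" "hyperbolic f" "c \<in> Zac"
  shows "\<exists>g\<in>Zac. \<forall>n. \<bar>c n - lp_mult f g n\<bar> \<le> (\<Sum>i | f i \<noteq> 0. \<bar>f i\<bar>)"
proof -
  define A where "A = {i. f i \<noteq> 0}"
  obtain h where "tempered h"
    and h: "\<And>n. (\<Sum>i\<in>A. of_int (f i) * h (n - i)) = complex_of_int (c n)"
    using laurent_conv_tempered_surj[OF assms(1,2) Zac_imp_tempered[OF assms(3)]]
    by (auto simp: A_def)
  define g where "g n = round (Re (h n))" for n
  have "g \<in> Zac" unfolding g_def by (rule tempered_round_Zac[OF \<open>tempered h\<close>])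
  moreover have "\<bar>c n - lp_mult f g n\<bar> \<le> (\<Sum>i\<in>A. \<bar>f i\<bar>)" for n
  proof -
    have "real_of_int (c n) = (\<Sum>i\<in>A. real_of_int (f i) * Re (h (n - i)))"
      using arg_cong[OF h[of n], of Re] by (simp add: Re_sum)
    then have "real_of_int (c n - lp_mult f g n)
        = (\<Sum>i\<in>A. real_of_int (f i) * (Re (h (n - i)) - real_of_int (g (n - i))))"
      by (simp add: lp_mult_def A_def[symmetric] right_diff_distrib sum_subtractf)
    also have "\<bar>\<dots>\<bar> \<le> (\<Sum>i\<in>A. \<bar>real_of_int (f i)\<bar>)"
    proof (rule order_trans[OF sum_abs sum_mono])
      fix i
      have "\<bar>Re (h (n - i)) - real_of_int (g (n - i))\<bar> \<le> 1"
        using of_int_round_abs_le[of "Re (h (n - i))"] unfolding g_def by linarith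
      then show "\<bar>real_of_int (f i) * (Re (h (n - i)) - real_of_int (g (n - i)))\<bar>
          \<le> \<bar>real_of_int (f i)\<bar>"
        by (simp add: abs_mult mult_left_le)
    qed
    finally have "real_of_int \<bar>c n - lp_mult f g n\<bar> \<le> real_of_int (\<Sum>i\<in>A. \<bar>f i\<bar>)"
      by simp
    then show ?thesis by (simp only: of_int_le_iff)
  qed
  ultimately show ?thesis by (auto simp: A_def)
qed

theorem mainTheorem5:
  fixes f :: "int \<Rightarrow> int"
  assumes "laurent_poly f" and "f \<noteq> (\<lambda>_. 0)" and "hyperbolic f"
  shows "\<exists>N::nat. {(\<lambda>n. b n + lp_mult f g n) | b g. b \<in> B_inf N \<and> g \<in> Zac} = Zac"
proof
  define N where "N = nat (\<Sum>i | f i \<noteq> 0. \<bar>f i\<bar>)"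
  show "{(\<lambda>n. b n + lp_mult f g n) | b g. b \<in> B_inf N \<and> g \<in> Zac} = Zac"
  proof (intro equalityI subsetI)
    fix x
    assume "x \<in> {(\<lambda>n. b n + lp_mult f g n) | b g. b \<in> B_inf N \<and> g \<in> Zac}"
    then obtain b g where "x = (\<lambda>n. b n + lp_mult f g n)" "b \<in> Zac" "g \<in> Zac"
      by (auto simp: B_inf_eq)
    then show "x \<in> Zac" using Zac_add Zac_lp_mult[OF assms(1)] by blast
  next
    fix c
    assume "c \<in> Zac"
    then obtain g where "g \<in> Zac" and approx: "\<forall>n. \<bar>c n - lp_mult f g n\<bar> \<le> int N"
      using Zac_lp_mult_approx[OF assms(1,3)] by (auto simp: N_def sum_nonneg)
    define b where "b = (\<lambda>n. c n - lp_mult f g n)"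
    have "b \<in> B_inf N"
      using Zac_diff[OF \<open>c \<in> Zac\<close> Zac_lp_mult[OF assms(1) \<open>g \<in> Zac\<close>]] approx
      by (simp add: B_inf_eq b_def)
    moreover have "c = (\<lambda>n. b n + lp_mult f g n)" by (simp add: b_def)
    ultimately show "c \<in> {(\<lambda>n. b n + lp_mult f g n) | b g. b \<in> B_inf N \<and> g \<in> Zac}"
      using \<open>g \<in> Zac\<close> by blast
  qed
qed

end
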